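(* Let $X$ be an alphabet, $L\subseteq X^*$, and let $I=Y_0^*\{x_1,\varepsilon\}Y_1^*\cdots\{x_n,\varepsilon\}Y_n^*$ with $Y_0,\dots,Y_n\subseteq X$ and $x_1,\dots,x_n\in X$. Let $m\ge N(L)+1$. Then the following are equivalent: (1) $I\subseteq \downarrow L$; (2) for every $m'\ge N(L)+1$, the word $w_{Y_0}^{m'}x_1w_{Y_1}^{m'}\cdots x_nw_{Y_n}^{m'}$ belongs to $\downarrow L$; (3) the word $w_{Y_0}^{m}x_1w_{Y_1}^{m}\cdots x_nw_{Y_n}^{m}$ belongs to $\downarrow L$.
   Context: $u\preceq v$ denotes the subword ordering on $X^*$ and $\downarrow L=\{u\mid\exists v\in L: u\preceq v\}$. An ideal expression is a finite product of factors, each of the form $Y^*$ with $Y\subseteq X$ (possibly empty, $\emptyset^*=\{\varepsilon\}$) or $\{x,\varepsilon\}$ with $x\in X$; the set it denotes is an ideal, and the length of the expression is its number of factors. Every downward closed language is a finite union of ideals. $N(L)$ denotes the least number $N$ such that $\downarrow L$ is a finite union of ideals each given by an expression of length at most $N$. For $Y\subseteq X$, $w_Y$ denotes a fixed word containing every letter of $Y$ exactly once and no other letters ($w_\emptyset=\varepsilon$). *)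

theory Defs
  imports Main "HOL-Library.Sublist"
begin

text \<open>Subword ordering is the library's subsequence relation subseq (scattered subword).\<close>

definition downclosure :: "'a list set \<Rightarrow> 'a list set" where
  "downclosure L = {u. \<exists>v\<in>L. subseq u v}"

datatype 'a factor = Star "'a set" | Opt 'a

fun factor_lang :: "'a factor \<Rightarrow> 'a list set" where
  "factor_lang (Star Y) = lists Y"
| "factor_lang (Opt x) = {[x], []}"

definition conc :: "'a list set \<Rightarrow> 'a list set \<Rightarrow> 'a list set" where
  "conc A B = {u @ v | u v. u \<in> A \<and> v \<in> B}"

fun expr_lang :: "'a factor list \<Rightarrow> 'a list set" where
  "expr_lang [] = {[]}"
| "expr_lang (f # fs) = conc (factor_lang f) (expr_lang fs)"

fun factor_over :: "'a set \<Rightarrow> 'a factor \<Rightarrow> bool" where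
  "factor_over X (Star Y) = (Y \<subseteq> X)"
| "factor_over X (Opt x) = (x \<in> X)"

definition expr_over :: "'a set \<Rightarrow> 'a factor list \<Rightarrow> bool" where
  "expr_over X e = (\<forall>f\<in>set e. factor_over X f)"

definition N_of :: "'a set \<Rightarrow> 'a list set \<Rightarrow> nat" where
  "N_of X L = (LEAST N. \<exists>E. finite E \<and> (\<forall>e\<in>E. expr_over X e \<and> length e \<le> N)
                 \<and> downclosure L = (\<Union>e\<in>E. expr_lang e))"

fun ideal_expr :: "(nat \<Rightarrow> 'a set) \<Rightarrow> (nat \<Rightarrow> 'a) \<Rightarrow> nat \<Rightarrow> 'a factor list" where
  "ideal_expr Y x 0 = [Star (Y 0)]"
| "ideal_expr Y x (Suc n) = ideal_expr Y x n @ [Opt (x (Suc n)), Star (Y (Suc n))]"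

definition lpow :: "'a list \<Rightarrow> nat \<Rightarrow> 'a list" where
  "lpow u m = concat (replicate m u)"

fun test_word :: "('a set \<Rightarrow> 'a list) \<Rightarrow> (nat \<Rightarrow> 'a set) \<Rightarrow> (nat \<Rightarrow> 'a) \<Rightarrow> nat \<Rightarrow> nat \<Rightarrow> 'a list" where
  "test_word w Y x m 0 = lpow (w (Y 0)) m"
| "test_word w Y x m (Suc n) = test_word w Y x m n @ [x (Suc n)] @ lpow (w (Y (Suc n))) m"

end

theory Submission
  imports Defs "HOL-Library.Infinite_Set"
begin

text \<open>The test words lie in I, so (1) implies (2) implies (3). For the converse, \<down>L is a finite
  union of ideals of length at most N(L): by Higman's lemma the complement of \<down>L is the upward
  closure of finitely many minimal words, and the words avoiding finitely many subwords form a
  finite union of ideals. The test word w_{Y_0}^m x_1 ... w_{Y_n}^m then lies in one of these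
  ideals J, which has fewer than m factors. Hence in each block w_{Y_i}^m some copy of w_{Y_i}
  is read inside a single factor Z^* of J, so Y_i \<subseteq> Z and the block can be replaced by any
  word over Y_i. Thus J contains every word of I.\<close>

section \<open>Higman's lemma\<close>

definition bad_seq :: "(nat \<Rightarrow> 'a list) \<Rightarrow> bool" where
  "bad_seq f \<longleftrightarrow> (\<forall>i j. i < j \<longrightarrow> \<not> subseq (f i) (f j))"

definition bad_prefix :: "'a set \<Rightarrow> 'a list list \<Rightarrow> bool" where
  "bad_prefix X p \<longleftrightarrow> (\<exists>f. bad_seq f \<and> (\<forall>i. f i \<in> lists X) \<and> (\<forall>i<length p. f i = p ! i))"

definition min_next :: "'a set \<Rightarrow> 'a list list \<Rightarrow> 'a list" where
  "min_next X p = arg_min length (\<lambda>w. bad_prefix X (p @ [w]))"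

primrec min_bad_prefix :: "'a set \<Rightarrow> nat \<Rightarrow> 'a list list" where
  "min_bad_prefix X 0 = []"
| "min_bad_prefix X (Suc n) = min_bad_prefix X n @ [min_next X (min_bad_prefix X n)]"

lemma bad_prefix_snoc:
  assumes "bad_seq f" "\<forall>i. f i \<in> lists X" "\<forall>i<length p. f i = p ! i"
  shows "bad_prefix X (p @ [f (length p)])"
  unfolding bad_prefix_def using assms by (auto simp: nth_append less_Suc_eq)

lemma min_next_le:
  assumes "bad_seq f" "\<forall>i. f i \<in> lists X" "\<forall>i<length p. f i = p ! i"
  shows "length (min_next X p) \<le> length (f (length p))"
  unfolding min_next_def by (rule arg_min_nat_le) (rule bad_prefix_snoc[OF assms])

lemma bad_prefix_min_next:
  assumes "bad_prefix X p"
  shows "bad_prefix X (p @ [min_next X p])"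
proof -
  obtain f where "bad_seq f" "\<forall>i. f i \<in> lists X" "\<forall>i<length p. f i = p ! i"
    using assms unfolding bad_prefix_def by blast
  then have "bad_prefix X (p @ [f (length p)])" by (rule bad_prefix_snoc)
  then show ?thesis unfolding min_next_def by (rule arg_min_natI)
qed

lemma length_min_bad_prefix [simp]: "length (min_bad_prefix X n) = n"
  by (induct n) auto

lemma nth_min_bad_prefix: "i < n \<Longrightarrow> min_bad_prefix X n ! i = min_next X (min_bad_prefix X i)"
  by (induct n) (auto simp: nth_append less_Suc_eq)

lemma minimal_bad_seq:
  assumes "bad_seq f" "\<forall>i. f i \<in> lists X"
  obtains m where "bad_seq m" "\<forall>i. m i \<in> lists X"
    "\<And>g n. bad_seq g \<Longrightarrow> \<forall>i. g i \<in> lists X \<Longrightarrow> \<forall>i<n. g i = m i \<Longrightarrow> length (m n) \<le> length (g n)"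
proof
  define m where "m i = min_next X (min_bad_prefix X i)" for i
  have prefix_m: "min_bad_prefix X n ! i = m i" if "i < n" for i n
    using that unfolding m_def by (rule nth_min_bad_prefix)
  have prefix_bad: "bad_prefix X (min_bad_prefix X n)" for n
  proof (induct n)
    case 0 show ?case using assms unfolding bad_prefix_def by auto
  next
    case (Suc n) then show ?case using bad_prefix_min_next by simp
  qed
  have agree: "\<exists>g. bad_seq g \<and> (\<forall>i. g i \<in> lists X) \<and> (\<forall>i\<le>n. g i = m i)" for n
  proof -
    obtain g where "bad_seq g" "\<forall>i. g i \<in> lists X" "\<forall>i<Suc n. g i = min_bad_prefix X (Suc n) ! i"
      using prefix_bad[of "Suc n"] unfolding bad_prefix_def by auto
    then show ?thesis using prefix_m[of _ "Suc n"] by (metis less_Suc_eq_le)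
  qed
  show "\<forall>i. m i \<in> lists X"
  proof
    fix i show "m i \<in> lists X" using agree[of i] by (metis order_refl)
  qed
  show "bad_seq m" unfolding bad_seq_def
  proof (intro allI impI)
    fix i j :: nat assume "i < j"
    obtain g where "bad_seq g" "\<forall>k\<le>j. g k = m k" using agree by blast
    then show "\<not> subseq (m i) (m j)" using \<open>i < j\<close> unfolding bad_seq_def by (metis less_imp_le order_refl)
  qed
  fix g n assume "bad_seq g" "\<forall>i. g i \<in> lists X" "\<forall>i<n. g i = m i"
  then have "length (min_next X (min_bad_prefix X n)) \<le> length (g n)"
    using min_next_le[of g X "min_bad_prefix X n"] prefix_m by simp
  then show "length (m n) \<le> length (g n)" unfolding m_def .
qed

lemma bad_seq_graft_tails:
  assumes "bad_seq m" "strict_mono \<phi>" "\<And>i. m (\<phi> i) = a # t i"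
  shows "bad_seq (\<lambda>i. if i < \<phi> 0 then m i else t (i - \<phi> 0))"
  unfolding bad_seq_def
proof (intro allI impI)
  fix i j :: nat assume "i < j"
  consider "j < \<phi> 0" | "i < \<phi> 0" "\<phi> 0 \<le> j" | "\<phi> 0 \<le> i" by linarith
  then show "\<not> subseq (if i < \<phi> 0 then m i else t (i - \<phi> 0)) (if j < \<phi> 0 then m j else t (j - \<phi> 0))"
  proof cases
    case 1
    then show ?thesis using \<open>i < j\<close> assms(1) unfolding bad_seq_def by auto
  next
    case 2
    have "i < \<phi> (j - \<phi> 0)" using 2 strict_mono_less_eq[OF assms(2), of 0 "j - \<phi> 0"] by simp
    then have "\<not> subseq (m i) (a # t (j - \<phi> 0))" using assms(1,3) unfolding bad_seq_def by metis
    then show ?thesis using 2 by (auto dest: list_emb_Cons)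
  next
    case 3
    have "\<phi> (i - \<phi> 0) < \<phi> (j - \<phi> 0)" using 3 \<open>i < j\<close> assms(2) by (simp add: strict_mono_less)
    then have "\<not> subseq (a # t (i - \<phi> 0)) (a # t (j - \<phi> 0))"
      using assms(1,3) unfolding bad_seq_def by metis
    then show ?thesis using 3 \<open>i < j\<close> by auto
  qed
qed

text \<open>In a minimal bad sequence all terms start with a letter, infinitely many with the same
  letter; cutting that letter off those terms gives a bad sequence that undercuts the minimal
  one.\<close>
theorem higman:
  fixes f :: "nat \<Rightarrow> 'a list"
  assumes "finite X" "\<forall>i. f i \<in> lists X"
  shows "\<exists>i j. i < j \<and> subseq (f i) (f j)"
proof (rule ccontr)
  assume "\<not> ?thesis"
  then have "bad_seq f" unfolding bad_seq_def by blast
  then obtain m where m_bad: "bad_seq m" and m_lists: "\<forall>i. m i \<in> lists X"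
    and m_min: "\<And>g n. bad_seq g \<Longrightarrow> \<forall>i. g i \<in> lists X \<Longrightarrow> \<forall>i<n. g i = m i \<Longrightarrow> length (m n) \<le> length (g n)"
    using minimal_bad_seq assms(2) by blast
  have m_nonempty: "m i \<noteq> []" for i
    using m_bad unfolding bad_seq_def by (metis lessI list_emb_Nil)
  have "range (hd \<circ> m) \<subseteq> X" using m_lists m_nonempty by (auto intro: hd_in_set)
  then have "finite (range (hd \<circ> m))" using assms(1) finite_subset by blast
  then obtain i0 where "infinite {i. hd (m i) = hd (m i0)}"
    using pigeonhole_infinite[of "UNIV :: nat set" "hd \<circ> m"] by auto
  then obtain S a where S: "infinite S" "\<forall>i\<in>S. hd (m i) = a" by blast
  define \<phi> where "\<phi> = enumerate S"
  have m_\<phi>: "m (\<phi> i) = a # tl (m (\<phi> i))" for i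
  proof -
    have "\<phi> i \<in> S" unfolding \<phi>_def using S(1) by (rule enumerate_in_set)
    then show ?thesis using m_nonempty[of "\<phi> i"] S(2) by (cases "m (\<phi> i)") auto
  qed
  define g where "g i = (if i < \<phi> 0 then m i else tl (m (\<phi> (i - \<phi> 0))))" for i
  have "bad_seq g"
    unfolding g_def using m_bad strict_mono_enumerate[OF S(1)] m_\<phi>
    unfolding \<phi>_def by (rule bad_seq_graft_tails)
  moreover have "\<forall>i. g i \<in> lists X"
    unfolding g_def using m_lists m_nonempty by (auto dest: list.set_sel(2))
  ultimately have "length (m (\<phi> 0)) \<le> length (g (\<phi> 0))" by (rule m_min) (simp add: g_def)
  moreover have "g (\<phi> 0) = tl (m (\<phi> 0))" by (simp add: g_def)
  ultimately show False using m_nonempty[of "\<phi> 0"] by (cases "m (\<phi> 0)") auto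
qed

section \<open>Languages of ideal expressions\<close>

lemma expr_lang_Cons:
  "w \<in> expr_lang (f # e) \<longleftrightarrow> (\<exists>u v. w = u @ v \<and> u \<in> factor_lang f \<and> v \<in> expr_lang e)"
  by (auto simp: conc_def)

lemma expr_lang_ConsI: "u \<in> factor_lang f \<Longrightarrow> v \<in> expr_lang e \<Longrightarrow> u @ v \<in> expr_lang (f # e)"
  by (auto simp: conc_def)

lemma expr_lang_Star_Cons:
  "w \<in> expr_lang (Star Y # e) \<longleftrightarrow> (\<exists>u v. w = u @ v \<and> u \<in> lists Y \<and> v \<in> expr_lang e)"
  by (simp add: conc_def)

lemma expr_lang_Opt_Cons:
  "w \<in> expr_lang (Opt a # e) \<longleftrightarrow> w \<in> expr_lang e \<or> (\<exists>v. w = a # v \<and> v \<in> expr_lang e)"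
  by (auto simp: conc_def) (metis append_Cons append_Nil)

lemma expr_lang_Cons_subset: "expr_lang e \<subseteq> expr_lang (f # e)"
  by (cases f) (auto simp: conc_def intro: exI[of _ "[]"])

lemma expr_lang_append:
  "w \<in> expr_lang (e @ e') \<longleftrightarrow> (\<exists>u v. w = u @ v \<and> u \<in> expr_lang e \<and> v \<in> expr_lang e')"
proof (induct e arbitrary: w)
  case (Cons f e)
  show ?case
    unfolding append_Cons expr_lang_Cons Cons by (metis append.assoc)
qed simp

lemma factor_lang_downward: "subseq u v \<Longrightarrow> v \<in> factor_lang f \<Longrightarrow> u \<in> factor_lang f"
proof (cases f)
  case (Opt a)
  assume "subseq u v" "v \<in> factor_lang f"
  then show ?thesis using Opt by (cases u) (auto split: if_splits)
qed (auto elim: list_emb_set)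

lemma expr_lang_downward: "subseq u v \<Longrightarrow> v \<in> expr_lang e \<Longrightarrow> u \<in> expr_lang e"
proof (induct e arbitrary: u v)
  case (Cons f e)
  then obtain v1 v2 where v: "v = v1 @ v2" "v1 \<in> factor_lang f" "v2 \<in> expr_lang e"
    unfolding expr_lang_Cons by blast
  with Cons(2) obtain u1 u2 where "u = u1 @ u2" "subseq u1 v1" "subseq u2 v2"
    by (auto elim: subseq_appendE)
  then show ?case using v Cons(1) factor_lang_downward unfolding expr_lang_Cons by blast
qed simp

lemma expr_over_Cons [simp]: "expr_over X (f # e) \<longleftrightarrow> factor_over X f \<and> expr_over X e"
  by (simp add: expr_over_def)

lemma expr_lang_lists: "expr_over X e \<Longrightarrow> expr_lang e \<subseteq> lists X"
proof (induct e)
  case (Cons f e)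
  then show ?case by (cases f) (fastforce simp: conc_def)+
qed simp

section \<open>Words avoiding finitely many subwords\<close>

definition residual :: "'a \<Rightarrow> 'a list list \<Rightarrow> 'a list list" where
  "residual a M = map (\<lambda>u. if hd u = a then tl u else u) M"

lemma residual_shorter:
  assumes "[] \<notin> set M" "a \<in> hd ` set M"
  shows "sum_list (map length (residual a M)) < sum_list (map length M)"
  using assms unfolding residual_def
proof (induct M)
  case (Cons u M)
  have le: "sum_list (map length (map (\<lambda>u. if hd u = a then tl u else u) M)) \<le> sum_list (map length M)"
    by (induct M) auto
  show ?case using Cons le by (cases u) (auto simp: add_less_le_mono add_le_less_mono)
qed simp

text \<open>Words over X avoiding every word of M as a subword: read up to the first letter
  that begins a word of M; from there on it suffices to avoid the residuals.\<close>
function avoiding :: "'a set \<Rightarrow> 'a list list \<Rightarrow> 'a factor list set" where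
  "avoiding X M = (if [] \<in> set M then {} else
     insert [Star (X - hd ` set M)]
       (\<Union>a\<in>hd ` set M. Cons (Star (X - hd ` set M)) ` Cons (Opt a) ` avoiding X (residual a M)))"
  by pat_completeness auto
termination
  by (relation "measure (\<lambda>(X, M). sum_list (map length M))") (auto intro: residual_shorter)

declare avoiding.simps [simp del]

lemma residual_lists: "set M \<subseteq> lists X \<Longrightarrow> set (residual a M) \<subseteq> lists X"
proof -
  have "tl u \<in> lists X" if "u \<in> lists X" for u using that by (cases u) auto
  then show "set M \<subseteq> lists X \<Longrightarrow> set (residual a M) \<subseteq> lists X" by (auto simp: residual_def)
qed

lemma subseq_residual_iff:
  assumes "[] \<notin> set M"
  shows "(\<exists>u\<in>set M. subseq u (a # t)) \<longleftrightarrow> (\<exists>u\<in>set (residual a M). subseq u t)"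
proof
  assume "\<exists>u\<in>set M. subseq u (a # t)"
  then obtain b u where "b # u \<in> set M" "subseq (b # u) (a # t)"
    using assms by (metis list.exhaust)
  then show "\<exists>u\<in>set (residual a M). subseq u t"
    unfolding residual_def by (cases "b = a") force+
next
  assume "\<exists>u\<in>set (residual a M). subseq u t"
  then obtain u where "u \<in> set M" "subseq (if hd u = a then tl u else u) t"
    unfolding residual_def by auto
  moreover have "hd u # tl u = u" using \<open>u \<in> set M\<close> assms by (metis list.collapse)
  ultimately show "\<exists>u\<in>set M. subseq u (a # t)"
    by (metis list_emb_Cons subseq_Cons2)
qed

lemma subseq_append_skip: "hd u \<notin> set s \<Longrightarrow> u \<noteq> [] \<Longrightarrow> subseq u (s @ r) \<Longrightarrow> subseq u r"
proof (induct s)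
  case (Cons b s)
  then show ?case by (cases u) (auto split: if_splits)
qed simp

lemma avoidingE [consumes 1, case_names star star_opt]:
  assumes "e \<in> avoiding X M"
  obtains "[] \<notin> set M" "e = [Star (X - hd ` set M)]"
  | a e' where "[] \<notin> set M" "a \<in> hd ` set M" "e = Star (X - hd ` set M) # Opt a # e'"
      "e' \<in> avoiding X (residual a M)"
  using assms by (subst (asm) avoiding.simps) (auto split: if_splits)

lemma avoidingI:
  assumes "[] \<notin> set M"
  shows "[Star (X - hd ` set M)] \<in> avoiding X M"
    and "a \<in> hd ` set M \<Longrightarrow> e \<in> avoiding X (residual a M) \<Longrightarrow>
      Star (X - hd ` set M) # Opt a # e \<in> avoiding X M"
  using assms by (subst avoiding.simps; auto)+

lemma finite_avoiding: "finite (avoiding X M)"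
  by (induct X M rule: avoiding.induct) (subst avoiding.simps, auto)

lemma avoiding_over: "set M \<subseteq> lists X \<Longrightarrow> e \<in> avoiding X M \<Longrightarrow> expr_over X e"
proof (induct X M arbitrary: e rule: avoiding.induct)
  case (1 X M)
  from 1(3) show ?case
  proof (cases rule: avoidingE)
    case star
    then show ?thesis by (simp add: expr_over_def)
  next
    case (star_opt a e')
    have "a \<in> X" using star_opt(1,2) \<open>set M \<subseteq> lists X\<close> by (auto intro: hd_in_set)
    moreover have "expr_over X e'"
      using 1(1)[OF star_opt(1,2) residual_lists[OF \<open>set M \<subseteq> lists X\<close>] star_opt(4)] .
    ultimately show ?thesis using star_opt(3) by auto
  qed
qed

lemma avoiding_sound: "e \<in> avoiding X M \<Longrightarrow> v \<in> expr_lang e \<Longrightarrow> u \<in> set M \<Longrightarrow> \<not> subseq u v"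
proof (induct X M arbitrary: e v u rule: avoiding.induct)
  case (1 X M)
  let ?Z = "X - hd ` set M"
  show ?case
  proof
    assume "subseq u v"
    from 1(2) show False
    proof (cases rule: avoidingE)
      case star
      then have "u \<noteq> []" using \<open>u \<in> set M\<close> by auto
      then obtain y where "y \<in> set v" "hd u = y"
        using list_emb_set[OF \<open>subseq u v\<close> hd_in_set] by metis
      moreover have "v \<in> lists ?Z" using star \<open>v \<in> expr_lang e\<close> by (simp add: conc_def)
      ultimately show False using \<open>u \<in> set M\<close> by auto
    next
      case (star_opt a e')
      have "v \<in> expr_lang (Star ?Z # Opt a # e')" using \<open>v \<in> expr_lang e\<close> star_opt(3) by (simp only:)
      then obtain s r where v: "v = s @ r" "s \<in> lists ?Z" "r \<in> expr_lang (Opt a # e')"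
        unfolding expr_lang_Star_Cons by blast
      have "u \<noteq> []" "hd u \<notin> set s" using star_opt(1) \<open>u \<in> set M\<close> v(2) by auto
      then have "subseq u r" using subseq_append_skip \<open>subseq u v\<close> v(1) by blast
      obtain t where "t \<in> expr_lang e'" "subseq u (a # t)"
        using v(3) \<open>subseq u r\<close> unfolding expr_lang_Opt_Cons by (auto intro: list_emb_Cons)
      then obtain u' where "u' \<in> set (residual a M)" "subseq u' t"
        using subseq_residual_iff[OF star_opt(1)] \<open>u \<in> set M\<close> by blast
      then show False using 1(1)[OF star_opt(1,2,4) \<open>t \<in> expr_lang e'\<close>] by blast
    qed
  qed
qed

lemma avoiding_complete:
  "v \<in> lists X \<Longrightarrow> \<forall>u\<in>set M. \<not> subseq u v \<Longrightarrow> \<exists>e\<in>avoiding X M. v \<in> expr_lang e"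
proof (induct X M arbitrary: v rule: avoiding.induct)
  case (1 X M)
  let ?H = "hd ` set M"
  have M: "[] \<notin> set M" using 1(3) by auto
  show ?case
  proof (cases "\<exists>c\<in>set v. c \<in> ?H")
    case False
    then have "v @ [] \<in> expr_lang [Star (X - ?H)]"
      using 1(2) unfolding expr_lang_Star_Cons by auto
    then have "v \<in> expr_lang [Star (X - ?H)]" by (simp only: append_Nil2)
    then show ?thesis using avoidingI(1)[OF M, of X] by (rule bexI)
  next
    case True
    then obtain s a t where v: "v = s @ a # t" "a \<in> ?H" "\<forall>c\<in>set s. c \<notin> ?H"
      by (rule split_list_first_propE)
    have "\<not> subseq u t" if "u \<in> set (residual a M)" for u
    proof
      assume "subseq u t"
      with that have "\<exists>u\<in>set (residual a M). subseq u t" by (rule rev_bexI)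
      then obtain u' where "u' \<in> set M" "subseq u' (a # t)"
        unfolding subseq_residual_iff[OF M, symmetric] by blast
      then show False using 1(3) subseq_drop_many[of u' "a # t" s] unfolding v(1) by blast
    qed
    moreover have "t \<in> lists X" using 1(2) v(1) by simp
    ultimately obtain e where "e \<in> avoiding X (residual a M)" "t \<in> expr_lang e"
      using 1(1)[OF M v(2)] by blast
    moreover have "s \<in> lists (X - ?H)" using 1(2) v by auto
    ultimately have "v \<in> expr_lang (Star (X - ?H) # Opt a # e)"
      unfolding v(1) expr_lang_Star_Cons expr_lang_Opt_Cons by blast
    then show ?thesis using avoidingI(2)[OF M v(2) \<open>e \<in> avoiding X (residual a M)\<close>] by (rule bexI)
  qed
qed

lemma avoiding_lang:
  assumes "set M \<subseteq> lists X"
  shows "(\<Union>e\<in>avoiding X M. expr_lang e) = {v \<in> lists X. \<forall>u\<in>set M. \<not> subseq u v}"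
proof (intro equalityI subsetI)
  fix v assume "v \<in> (\<Union>e\<in>avoiding X M. expr_lang e)"
  then obtain e where e: "e \<in> avoiding X M" "v \<in> expr_lang e" by blast
  have "v \<in> lists X" using expr_lang_lists[OF avoiding_over[OF assms e(1)]] e(2) by (rule subsetD)
  moreover have "\<forall>u\<in>set M. \<not> subseq u v" using avoiding_sound[OF e] by (intro ballI)
  ultimately show "v \<in> {v \<in> lists X. \<forall>u\<in>set M. \<not> subseq u v}" by simp
next
  fix v assume "v \<in> {v \<in> lists X. \<forall>u\<in>set M. \<not> subseq u v}"
  then have "\<exists>e\<in>avoiding X M. v \<in> expr_lang e" by (intro avoiding_complete) simp_all
  then show "v \<in> (\<Union>e\<in>avoiding X M. expr_lang e)" by (simp only: UN_iff)
qed

section \<open>Downward closed languages are finite unions of ideals\<close>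

lemma finite_subseq_minimal:
  assumes "finite X" "C \<subseteq> lists X"
  shows "finite {u \<in> C. \<forall>v\<in>C. subseq v u \<longrightarrow> v = u}" (is "finite ?M")
proof (rule ccontr)
  assume "infinite ?M"
  then obtain f :: "nat \<Rightarrow> 'a list" where f: "inj f" "range f \<subseteq> ?M"
    using infinite_countable_subset by blast
  then have "\<forall>i. f i \<in> lists X" using assms(2) by auto
  then obtain i j where "i < j" "subseq (f i) (f j)" using higman[OF assms(1)] by blast
  moreover have "f i \<in> C" "f j \<in> ?M" using f(2) by auto
  ultimately have "f i = f j" by blast
  with f(1) \<open>i < j\<close> show False by (auto dest: injD)
qed

lemma exists_subseq_minimal:
  assumes "v \<in> C"
  obtains u where "u \<in> C" "subseq u v" "\<forall>w\<in>C. subseq w u \<longrightarrow> w = u"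
proof -
  define u where "u = arg_min length (\<lambda>u. u \<in> C \<and> subseq u v)"
  have u: "u \<in> C \<and> subseq u v" unfolding u_def by (rule arg_min_natI[of _ v]) (simp add: assms)
  have "w = u" if "w \<in> C" "subseq w u" for w
  proof -
    have "w \<in> C \<and> subseq w v" using that u subseq_order.trans by blast
    then have "length u \<le> length w" unfolding u_def by (rule arg_min_nat_le)
    then show "w = u" using that(2) list_emb_length subseq_same_length le_antisym by metis
  qed
  with u that show ?thesis by blast
qed

text \<open>The complement of a downward closed set is the upward closure of its finitely many
  (by Higman's lemma) minimal words.\<close>
theorem downward_closed_finite_union_of_ideals:
  assumes "finite X" "D \<subseteq> lists X" and down: "\<And>u v. subseq u v \<Longrightarrow> v \<in> D \<Longrightarrow> u \<in> D"
  obtains E where "finite E" "\<forall>e\<in>E. expr_over X e" "D = (\<Union>e\<in>E. expr_lang e)"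
proof -
  define C where "C = lists X - D"
  define Min where "Min = {u \<in> C. \<forall>v\<in>C. subseq v u \<longrightarrow> v = u}"
  have "finite Min" unfolding Min_def by (rule finite_subseq_minimal[OF assms(1)]) (simp add: C_def)
  then obtain M where M: "set M = Min" using finite_list by blast
  have M_lists: "set M \<subseteq> lists X" unfolding M Min_def C_def by blast
  have "D = {v \<in> lists X. \<forall>u\<in>set M. \<not> subseq u v}"
  proof (intro equalityI subsetI)
    fix v assume "v \<in> D"
    have "\<not> subseq u v" if "u \<in> set M" for u
      using that down[of u v] \<open>v \<in> D\<close> unfolding M Min_def C_def by blast
    then show "v \<in> {v \<in> lists X. \<forall>u\<in>set M. \<not> subseq u v}"
      using \<open>v \<in> D\<close> assms(2) by blast
  next
    fix v assume v: "v \<in> {v \<in> lists X. \<forall>u\<in>set M. \<not> subseq u v}"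
    show "v \<in> D"
    proof (rule ccontr)
      assume "v \<notin> D"
      with v have "v \<in> C" unfolding C_def by blast
      then obtain u where "u \<in> C" "subseq u v" "\<forall>w\<in>C. subseq w u \<longrightarrow> w = u"
        by (rule exists_subseq_minimal)
      then have "u \<in> set M" unfolding M Min_def by blast
      with v \<open>subseq u v\<close> show False by blast
    qed
  qed
  also have "\<dots> = (\<Union>e\<in>avoiding X M. expr_lang e)"
    using avoiding_lang[OF M_lists] by (rule sym)
  finally have "D = (\<Union>e\<in>avoiding X M. expr_lang e)" .
  moreover have "\<forall>e\<in>avoiding X M. expr_over X e"
    using avoiding_over[OF M_lists] by (intro ballI)
  ultimately show ?thesis by (intro that[OF finite_avoiding])
qed

lemma N_of_attained:
  assumes "finite X" "L \<subseteq> lists X"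
  obtains E where "finite E" "\<forall>e\<in>E. expr_over X e \<and> length e \<le> N_of X L"
    "downclosure L = (\<Union>e\<in>E. expr_lang e)"
proof -
  have "downclosure L \<subseteq> lists X"
    using assms(2) by (auto simp: downclosure_def elim!: list_emb_set)
  moreover have "u \<in> downclosure L" if "subseq u v" "v \<in> downclosure L" for u v
    using that subseq_order.trans unfolding downclosure_def by blast
  ultimately obtain E where E: "finite E" "\<forall>e\<in>E. expr_over X e" "downclosure L = (\<Union>e\<in>E. expr_lang e)"
    by (rule downward_closed_finite_union_of_ideals[OF assms(1)])
  define P where "P N \<longleftrightarrow> (\<exists>E. finite E \<and> (\<forall>e\<in>E. expr_over X e \<and> length e \<le> N)
      \<and> downclosure L = (\<Union>e\<in>E. expr_lang e))" for N
  have "\<forall>e\<in>E. expr_over X e \<and> length e \<le> Max (length ` E)" using E(1,2) by simp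
  then have "P (Max (length ` E))" unfolding P_def using E(1,3) by (intro exI[of _ E] conjI)
  then have "P (N_of X L)" unfolding N_of_def P_def[symmetric] by (rule LeastI)
  then show ?thesis unfolding P_def by (elim exE conjE) (rule that; assumption)
qed

section \<open>Pumping the blocks of the test word\<close>

lemma lpow_Suc: "lpow u (Suc k) = u @ lpow u k"
  by (simp add: lpow_def)

lemma lpow_in_lists: "lpow u k \<in> lists (set u)"
  by (auto simp: lpow_def)

lemma subseq_insert_middle: "subseq (p @ s) (p @ u @ s)"
  unfolding subseq_append' by (rule subseq_drop_many) simp

text \<open>Either the first factor ends inside the first copy of u, and that copy can be
  deleted, or it swallows a whole copy: a factor Z^* can then take in v as well, while a
  factor {x, \<epsilon>} has consumed the whole of u = [x].\<close>
lemma expr_lang_pump_Cons: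
  assumes IH: "\<And>p. p @ lpow u k @ s \<in> expr_lang e \<Longrightarrow> p @ v @ s \<in> expr_lang e"
    and v: "v \<in> lists (set u)" and "u \<noteq> []"
    and "p @ lpow u (Suc k) @ s \<in> expr_lang (f # e)"
  shows "p @ v @ s \<in> expr_lang (f # e)"
proof -
  obtain a b where ab: "(p @ u) @ lpow u k @ s = a @ b" "a \<in> factor_lang f" "b \<in> expr_lang e"
    using assms(4) unfolding expr_lang_Cons by (auto simp: lpow_Suc)
  consider c where "p @ u = a @ c" "c @ lpow u k @ s = b"
    | d where "(p @ u) @ d = a" "lpow u k @ s = d @ b"
    using ab(1) unfolding append_eq_append_conv2 by blast
  then show ?thesis
  proof cases
    case (1 c)
    have "c @ v @ s \<in> expr_lang e" using IH ab(3) 1(2) by blast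
    with ab(2) have "a @ c @ v @ s \<in> expr_lang (f # e)" by (rule expr_lang_ConsI)
    then have "p @ u @ v @ s \<in> expr_lang (f # e)" using 1(1) by (metis append.assoc)
    with subseq_insert_middle show ?thesis by (rule expr_lang_downward)
  next
    case (2 d)
    show ?thesis
    proof (cases f)
      case (Star Z)
      have "p @ u @ d \<in> lists Z" using ab(2) 2(1) Star by auto
      then have "p @ v @ u @ d \<in> factor_lang f" using v Star by auto
      from this ab(3) have "(p @ v @ u @ d) @ b \<in> expr_lang (f # e)" by (rule expr_lang_ConsI)
      then have "(p @ v) @ (u @ lpow u k) @ s \<in> expr_lang (f # e)" using 2(2) by simp
      with subseq_insert_middle have "(p @ v) @ s \<in> expr_lang (f # e)" by (rule expr_lang_downward)
      then show ?thesis by simp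
    next
      case (Opt x)
      have "length (p @ u @ d) \<le> 1" using ab(2) 2(1) Opt by auto
      then have "p = []" "d = []" using \<open>u \<noteq> []\<close> by (cases u; auto)+
      then have "v @ s \<in> expr_lang e" using IH[of "[]"] ab(3) 2(2) by simp
      then show ?thesis using \<open>p = []\<close> expr_lang_Cons_subset by auto
    qed
  qed
qed

text \<open>With fewer factors than copies of u, some copy is swallowed by a single factor Z^*,
  which then absorbs any word over the letters of u; the other copies are deleted.\<close>
lemma expr_lang_pump:
  assumes "v \<in> lists (set u)" "length e < k" "p @ lpow u k @ s \<in> expr_lang e"
  shows "p @ v @ s \<in> expr_lang e"
proof (cases "u = []")
  case True
  then show ?thesis using assms(1,3) by (simp add: lpow_def)
next
  case False
  from assms(2,3) show ?thesis
  proof (induct e arbitrary: p k)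
    case Nil
    then show ?case using False by (cases k) (simp_all add: lpow_Suc)
  next
    case (Cons f e)
    then obtain k' where "k = Suc k'" "length e < k'" by (cases k) auto
    then show ?case using expr_lang_pump_Cons[OF Cons(1) assms(1) False] Cons(3) by simp
  qed
qed

fun interleave :: "(nat \<Rightarrow> 'a list) \<Rightarrow> (nat \<Rightarrow> 'a) \<Rightarrow> nat \<Rightarrow> 'a list" where
  "interleave B x 0 = B 0"
| "interleave B x (Suc n) = interleave B x n @ x (Suc n) # B (Suc n)"

lemma test_word_eq_interleave: "test_word w Y x m n = interleave (\<lambda>i. lpow (w (Y i)) m) x n"
  by (induct n) simp_all

lemma interleave_cong: "(\<And>i. i \<le> n \<Longrightarrow> B i = B' i) \<Longrightarrow> interleave B x n = interleave B' x n"
  by (induct n) auto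

lemma interleave_fun_upd:
  assumes "j \<le> n"
  obtains p q where "interleave B x n = p @ B j @ q" "interleave (B(j := b)) x n = p @ b @ q"
  using assms
proof (induct n arbitrary: thesis)
  case 0
  then show ?case by (metis append_Nil append_Nil2 fun_upd_same interleave.simps(1) le_zero_eq)
next
  case (Suc n)
  show ?case
  proof (cases "j = Suc n")
    case True
    have "interleave (B(j := b)) x n = interleave B x n" by (rule interleave_cong) (simp add: True)
    then have "interleave (B(j := b)) x (Suc n) = (interleave B x n @ [x (Suc n)]) @ b @ []"
      using True by simp
    moreover have "interleave B x (Suc n) = (interleave B x n @ [x (Suc n)]) @ B j @ []"
      using True by simp
    ultimately show ?thesis by (rule Suc(2)[rotated])
  next
    case False
    then have "j \<le> n" using Suc(3) by simp
    obtain p q where pq: "interleave B x n = p @ B j @ q" "interleave (B(j := b)) x n = p @ b @ q"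
      using Suc(1)[OF _ \<open>j \<le> n\<close>] by blast
    have "interleave (B(j := b)) x (Suc n) = p @ b @ q @ x (Suc n) # B (Suc n)"
      using pq(2) False by simp
    moreover have "interleave B x (Suc n) = p @ B j @ q @ x (Suc n) # B (Suc n)"
      using pq(1) by simp
    ultimately show ?thesis by (rule Suc(2)[rotated])
  qed
qed

lemma expr_lang_interleave_pump:
  assumes "length e < m" "interleave (\<lambda>i. lpow (u i) m) x n \<in> expr_lang e"
    and "\<forall>i\<le>n. B i \<in> lists (set (u i))"
  shows "interleave B x n \<in> expr_lang e"
proof -
  have "interleave (\<lambda>i. if i < k then B i else lpow (u i) m) x n \<in> expr_lang e" if "k \<le> Suc n" for k
    using that
  proof (induct k)
    case 0
    then show ?case using assms(2) by simp
  next
    case (Suc k)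
    let ?C = "\<lambda>i. if i < k then B i else lpow (u i) m"
    obtain p q where pq: "interleave ?C x n = p @ lpow (u k) m @ q"
      "interleave (?C(k := B k)) x n = p @ B k @ q"
      using interleave_fun_upd[of k n ?C x "B k"] Suc(2) by auto
    have "B k \<in> lists (set (u k))" using assms(3) Suc(2) by simp
    moreover have "p @ lpow (u k) m @ q \<in> expr_lang e" using Suc pq(1) by simp
    ultimately have "p @ B k @ q \<in> expr_lang e" by (rule expr_lang_pump[OF _ assms(1)])
    moreover have "?C(k := B k) = (\<lambda>i. if i < Suc k then B i else lpow (u i) m)"
      by (auto simp: fun_eq_iff)
    ultimately show ?case using pq(2) by simp
  qed
  from this[of "Suc n"] show ?thesis by (simp cong: interleave_cong)
qed

lemma interleave_in_lang_ideal_expr: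
  "\<forall>i\<le>n. B i \<in> lists (Y i) \<Longrightarrow> interleave B x n \<in> expr_lang (ideal_expr Y x n)"
proof (induct n)
  case 0
  then show ?case using expr_lang_ConsI[of "B 0" "Star (Y 0)" "[]" "[]"] by simp
next
  case (Suc n)
  have "x (Suc n) # B (Suc n) @ [] \<in> expr_lang [Opt (x (Suc n)), Star (Y (Suc n))]"
    using Suc(2) unfolding expr_lang_Opt_Cons expr_lang_Star_Cons by auto
  moreover have "interleave B x n \<in> expr_lang (ideal_expr Y x n)" using Suc by simp
  ultimately show ?case using expr_lang_append by fastforce
qed

lemma lang_ideal_expr_subseq_interleave:
  "W \<in> expr_lang (ideal_expr Y x n) \<Longrightarrow> \<exists>B. (\<forall>i\<le>n. B i \<in> lists (Y i)) \<and> subseq W (interleave B x n)"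
proof (induct n arbitrary: W)
  case 0
  then have "W \<in> lists (Y 0)" by (simp add: conc_def)
  then show ?case by (intro exI[of _ "\<lambda>_. W"]) simp
next
  case (Suc n)
  then obtain W' t c where W: "W = W' @ t @ c" "W' \<in> expr_lang (ideal_expr Y x n)"
    "t = [x (Suc n)] \<or> t = []" "c \<in> lists (Y (Suc n))"
    unfolding ideal_expr.simps expr_lang_append by (auto simp: conc_def)
  obtain B where B: "\<forall>i\<le>n. B i \<in> lists (Y i)" "subseq W' (interleave B x n)"
    using Suc(1)[OF W(2)] by blast
  have "interleave (B(Suc n := c)) x n = interleave B x n" by (rule interleave_cong) simp
  moreover have "subseq (t @ c) (x (Suc n) # c)" using W(3) by auto
  ultimately have "subseq W (interleave (B(Suc n := c)) x (Suc n))"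
    using list_emb_append_mono[OF B(2)] W(1) by simp
  moreover have "\<forall>i\<le>Suc n. (B(Suc n := c)) i \<in> lists (Y i)" using B(1) W(4) by (simp add: le_Suc_eq)
  ultimately show ?case by blast
qed

lemma lang_ideal_expr_subset_downclosure:
  assumes "finite X" "L \<subseteq> lists X" "N_of X L < m" "\<And>i. i \<le> n \<Longrightarrow> set (u i) = Y i"
    and "interleave (\<lambda>i. lpow (u i) m) x n \<in> downclosure L"
  shows "expr_lang (ideal_expr Y x n) \<subseteq> downclosure L"
proof
  fix W assume "W \<in> expr_lang (ideal_expr Y x n)"
  then obtain B where B: "\<forall>i\<le>n. B i \<in> lists (Y i)" "subseq W (interleave B x n)"
    using lang_ideal_expr_subseq_interleave by blast
  obtain E where E: "finite E" "\<forall>e\<in>E. expr_over X e \<and> length e \<le> N_of X L"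
    "downclosure L = (\<Union>e\<in>E. expr_lang e)"
    by (rule N_of_attained[OF assms(1,2)])
  obtain e where e: "e \<in> E" "interleave (\<lambda>i. lpow (u i) m) x n \<in> expr_lang e"
    using assms(5) unfolding E(3) by blast
  have "interleave B x n \<in> expr_lang e"
  proof (rule expr_lang_interleave_pump)
    show "length e < m" using E(2) e(1) assms(3) by fastforce
    show "\<forall>i\<le>n. B i \<in> lists (set (u i))" using B(1) assms(4) by simp
  qed (fact e(2))
  then have "W \<in> expr_lang e" using B(2) by (rule expr_lang_downward[rotated])
  then show "W \<in> downclosure L" unfolding E(3) using e(1) by blast
qed

theorem mainTheorem2:
  fixes X :: "'a set" and L :: "'a list set"
    and Y :: "nat \<Rightarrow> 'a set" and x :: "nat \<Rightarrow> 'a" and n m :: nat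
    and w :: "'a set \<Rightarrow> 'a list"
  assumes "finite X"
    and "L \<subseteq> lists X"
    and "\<forall>i\<le>n. Y i \<subseteq> X"
    and "\<forall>i\<in>{1..n}. x i \<in> X"
    and "\<forall>Z\<subseteq>X. distinct (w Z) \<and> set (w Z) = Z"
    and "m \<ge> N_of X L + 1"
  shows "(expr_lang (ideal_expr Y x n) \<subseteq> downclosure L
            \<longleftrightarrow> (\<forall>m'\<ge>N_of X L + 1. test_word w Y x m' n \<in> downclosure L))
       \<and> ((\<forall>m'\<ge>N_of X L + 1. test_word w Y x m' n \<in> downclosure L)
            \<longleftrightarrow> test_word w Y x m n \<in> downclosure L)"
proof -
  have set_w: "set (w (Y i)) = Y i" if "i \<le> n" for i using assms(3,5) that by blast
  have test_word_in_ideal: "test_word w Y x k n \<in> expr_lang (ideal_expr Y x n)" for k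
    unfolding test_word_eq_interleave
    by (intro interleave_in_lang_ideal_expr allI impI) (metis lpow_in_lists set_w)
  have "expr_lang (ideal_expr Y x n) \<subseteq> downclosure L" if "test_word w Y x m n \<in> downclosure L"
    using assms(1,2) _ set_w that unfolding test_word_eq_interleave
    by (rule lang_ideal_expr_subset_downclosure) (use assms(6) in simp)
  then show ?thesis using test_word_in_ideal assms(6) by blast
qed

end
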